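(* Suppose $f\in\mathcal A_c$ with primitive $F\in\mathcal B_c$ such that the restriction $F|_I\in C^1(I)$ for some open interval $I\subset\mathbb R$ (so that on $I$, $f$ is the continuous function $F'(x)$, denoted $f(x)$). Define $u:\mathbb R\times[0,\infty)\to\mathbb R$ by $u(x,t)=f\ast\Theta_t(x)$ for $(x,t)\in\mathbb R\times(0,\infty)$, $u(x,0)=f(x)$ for $x\in I$, and $u(x,0)=0$ for $x\in\mathbb R\setminus I$. Then $u$ is continuous on $[\mathbb R\times(0,\infty)]\cup[I\times\{0\}]$.
   Context: Let $\mathcal B_c$ be the set of continuous $F:\mathbb R\to\mathbb R$ such that $\lim_{x\to\pm\infty}F(x)$ exist as real numbers and $\lim_{x\to-\infty}F(x)=0$. Let $\mathcal A_c$ be the set of distributions $f$ on $\mathbb R$ with $f=F'$ (distributional derivative) for some (unique) $F\in\mathcal B_c$, the primitive of $f$. The integral is $\int_a^bf=F(b)-F(a)$ for $a,b\in[-\infty,\infty]$. For $f\in\mathcal A_c$ and $h$ of bounded variation, $\int_{-\infty}^\infty fh:=F(\infty)h(\infty)-\int_{-\infty}^\infty F\,dh$ (Henstock–Stieltjes), and $f\ast h(x)=\int_{-\infty}^\infty f(\xi)h(x-\xi)\,d\xi$ in this sense. The heat kernel is $\Theta_t(x)=(4\pi t)^{-1/2}e^{-x^2/(4t)}$, $t>0$. *)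

theory Defs
  imports "HOL-Analysis.Analysis"
begin

definition heat_kernel :: "real \<Rightarrow> real \<Rightarrow> real" where
  "heat_kernel t x = exp (- (x\<^sup>2) / (4 * t)) / sqrt (4 * pi * t)"

definition in_Bc :: "(real \<Rightarrow> real) \<Rightarrow> bool" where
  "in_Bc F \<longleftrightarrow> continuous_on UNIV F \<and> (F \<longlongrightarrow> 0) at_bot \<and> (\<exists>L. (F \<longlongrightarrow> L) at_top)"

definition prim_top :: "(real \<Rightarrow> real) \<Rightarrow> real" where
  "prim_top F = Lim at_top F"

text \<open>The integral of f h, f = F' in A_c, for h of bounded variation:
  F(infinity) h(infinity) - int F dh.  For the (smooth) functions h used here
  the Henstock--Stieltjes integral int F dh is the integral of F h'.\<close>
definition Ac_integral_mult :: "(real \<Rightarrow> real) \<Rightarrow> (real \<Rightarrow> real) \<Rightarrow> real" where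
  "Ac_integral_mult F h =
     prim_top F * Lim at_top h - integral UNIV (\<lambda>\<xi>. F \<xi> * deriv h \<xi>)"

definition Ac_conv_heat :: "(real \<Rightarrow> real) \<Rightarrow> real \<Rightarrow> real \<Rightarrow> real" where
  "Ac_conv_heat F t x = Ac_integral_mult F (\<lambda>\<xi>. heat_kernel t (x - \<xi>))"

end

theory Submission
  imports Defs "HOL-Probability.Distributions" "HOL-Real_Asymp.Real_Asymp"
begin

(* Integrating by parts and substituting \<xi> = x + sqrt t * z turns f * \<Theta>\<^sub>t into
   u(x, t) = \<integral> D(x, sqrt t * z) * z * \<phi>(z) dz, where D(x, h) = (F(x + h) - F x) / h,
   \<phi> = - \<Theta>\<^sub>1' and \<integral> \<phi> = 0, \<integral> z \<phi>(z) dz = 1.  Setting D(x, 0) = F'(x), the same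
   integral equals F'(x) = u(x, 0) at t = 0.  The integrand is continuous in (x, t) because
   F is continuous and, on I, C^1 (by the mean value theorem D is jointly continuous at
   (x, 0)); it is dominated by 2 sup|F| / sqrt t * |\<phi>| for t away from 0, and by
   const * z \<phi>(z) near I \<times> {0}.  Dominated convergence gives continuity. *)

lemma bounded_range_if_limits_at_infinity:
  fixes F :: "real \<Rightarrow> real"
  assumes F_cont: "continuous_on UNIV F"
    and bot: "(F \<longlongrightarrow> a) at_bot" and top: "(F \<longlongrightarrow> b) at_top"
  shows "bounded (range F)"
proof -
  obtain x1 where x1: "\<And>x. x \<le> x1 \<Longrightarrow> \<bar>F x - a\<bar> < 1"
    using tendstoD[OF bot zero_less_one] by (auto simp: eventually_at_bot_linorder dist_real_def)
  obtain x2 where x2: "\<And>x. x \<ge> x2 \<Longrightarrow> \<bar>F x - b\<bar> < 1"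
    using tendstoD[OF top zero_less_one] by (auto simp: eventually_at_top_linorder dist_real_def)
  have "compact (F ` {x1..x2})"
    by (intro compact_continuous_image continuous_on_subset[OF F_cont]) auto
  then obtain C where C: "\<And>x. x \<in> {x1..x2} \<Longrightarrow> \<bar>F x\<bar> \<le> C"
    by (metis bounded_real compact_imp_bounded image_eqI)
  have "\<bar>F x\<bar> \<le> max C (max \<bar>a\<bar> \<bar>b\<bar> + 1)" for x
    using x1[of x] x2[of x] C[of x] by (cases "x \<le> x1"; cases "x \<ge> x2") auto
  then show ?thesis
    unfolding bounded_real by blast
qed

lemma isCont_integral_dominated:
  fixes K :: "'a::metric_space \<Rightarrow> 'b \<Rightarrow> 'c::{banach, second_countable_topology}"
  assumes meas: "\<And>p. K p \<in> borel_measurable M" and w: "integrable M w"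
    and cont: "\<And>z. z \<in> space M \<Longrightarrow> isCont (\<lambda>p. K p z) p0"
    and dom: "eventually (\<lambda>p. \<forall>z\<in>space M. norm (K p z) \<le> w z) (at p0)"
  shows "isCont (\<lambda>p. integral\<^sup>L M (K p)) p0"
  unfolding isCont_def tendsto_at_iff_sequentially comp_def
proof (intro allI impI)
  fix X :: "nat \<Rightarrow> 'a"
  assume "\<forall>i. X i \<in> UNIV - {p0}" and X: "X \<longlonglongrightarrow> p0"
  then have "filterlim X (at p0) sequentially"
    by (simp add: filterlim_at)
  from filterlim_iff[THEN iffD1, OF this, rule_format, OF dom]
  obtain N where N: "\<And>n. n \<ge> N \<Longrightarrow> \<forall>z\<in>space M. norm (K (X n) z) \<le> w z"
    by (auto simp: eventually_sequentially)
  show "(\<lambda>n. integral\<^sup>L M (K (X n))) \<longlonglongrightarrow> integral\<^sup>L M (K p0)"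
  proof (rule LIMSEQ_offset[where k = N], rule integral_dominated_convergence[where w = w])
    show "AE z in M. norm (K (X (n + N)) z) \<le> w z" for n
      using N[of "n + N"] by (intro AE_I2) auto
    show "AE z in M. (\<lambda>n. K (X (n + N)) z) \<longlonglongrightarrow> K p0 z"
      using cont X by (intro AE_I2 LIMSEQ_ignore_initial_segment isCont_tendsto_compose[where g = "\<lambda>p. K p _"])
  qed (use meas w in auto)
qed

definition difference_quotient :: "(real \<Rightarrow> real) \<Rightarrow> real \<Rightarrow> real \<Rightarrow> real" where
  "difference_quotient F x h = (if h = 0 then deriv F x else (F (x + h) - F x) / h)"

lemma difference_quotient_mean_value:
  fixes F :: "real \<Rightarrow> real"
  assumes diff: "\<And>y. \<bar>y - x\<bar> \<le> \<bar>h\<bar> \<Longrightarrow> F differentiable (at y)"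
  shows "\<exists>c. \<bar>c - x\<bar> \<le> \<bar>h\<bar> \<and> difference_quotient F x h = deriv F c"
proof -
  have deriv: "DERIV F y :> deriv F y" if "\<bar>y - x\<bar> \<le> \<bar>h\<bar>" for y
    using diff[OF that] by (simp add: DERIV_deriv_iff_real_differentiable)
  consider "h > 0" | "h = 0" | "h < 0" by linarith
  then show ?thesis
  proof cases
    case 1
    then obtain c where "x < c" "c < x + h" "F (x + h) - F x = h * deriv F c"
      using MVT2[of x "x + h" F "deriv F"] deriv by auto
    with 1 show ?thesis by (intro exI[of _ c]) (auto simp: difference_quotient_def)
  next
    case 2
    then show ?thesis by (auto simp: difference_quotient_def)
  next
    case 3
    then obtain c where "x + h < c" "c < x" "F x - F (x + h) = - h * deriv F c"
      using MVT2[of "x + h" x F "deriv F"] deriv by auto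
    with 3 show ?thesis by (intro exI[of _ c]) (auto simp: difference_quotient_def field_simps)
  qed
qed

lemma abs_difference_quotient_le:
  fixes F :: "real \<Rightarrow> real"
  assumes bound: "\<And>y. \<bar>F y\<bar> \<le> B" and h: "h \<noteq> 0"
  shows "\<bar>difference_quotient F x h\<bar> \<le> 2 * B / \<bar>h\<bar>"
proof -
  have "\<bar>F (x + h) - F x\<bar> \<le> 2 * B"
    using bound[of "x + h"] bound[of x] by linarith
  then show ?thesis
    using h by (simp add: difference_quotient_def divide_right_mono)
qed

lemma abs_difference_quotient_scaled_le:
  fixes F :: "real \<Rightarrow> real"
  assumes bound: "\<And>y. \<bar>F y\<bar> \<le> B" and s: "s > 0"
  shows "\<bar>difference_quotient F x (s * z)\<bar> * \<bar>z\<bar> \<le> 2 * B / s"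
proof (cases "z = 0")
  case False
  then have "\<bar>difference_quotient F x (s * z)\<bar> * \<bar>z\<bar> \<le> 2 * B / \<bar>s * z\<bar> * \<bar>z\<bar>"
    using s abs_difference_quotient_le[OF bound] by (intro mult_right_mono) auto
  also have "\<dots> = 2 * B / s"
    using False s by (simp add: abs_mult)
  finally show ?thesis .
qed (use bound[of 0] s in simp)

lemma isCont_difference_quotient_nonzero:
  fixes F :: "real \<Rightarrow> real"
  assumes F_cont: "continuous_on UNIV F" and h0: "h0 \<noteq> 0"
  shows "isCont (\<lambda>p. difference_quotient F (fst p) (snd p)) (x0, h0)"
proof -
  have "open {p :: real \<times> real. snd p \<noteq> 0}"
    by (intro open_Collect_neq continuous_intros)
  then have "eventually (\<lambda>p. snd p \<noteq> 0) (nhds (x0, h0))"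
    using eventually_nhds_in_open h0 by fastforce
  then have "eventually (\<lambda>p. difference_quotient F (fst p) (snd p)
      = (F (fst p + snd p) - F (fst p)) / snd p) (nhds (x0, h0))"
    by eventually_elim (simp add: difference_quotient_def)
  moreover have "isCont (\<lambda>p. (F (fst p + snd p) - F (fst p)) / snd p) (x0, h0)"
  proof -
    have F_at: "isCont F y" for y
      using F_cont by (simp add: continuous_on_eq_continuous_at)
    have "isCont (\<lambda>p. F (fst p + snd p)) (x0, h0)" "isCont (\<lambda>p. F (fst p)) (x0, h0)"
      by (intro isCont_o2[OF _ F_at] continuous_intros)+
    then show ?thesis
      using h0 by (intro continuous_intros) auto
  qed
  ultimately show ?thesis
    by (simp add: isCont_cong)
qed

lemma isCont_difference_quotient_zero:
  fixes F :: "real \<Rightarrow> real"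
  assumes I: "open I" "x0 \<in> I" and diff: "\<forall>x\<in>I. F differentiable (at x)"
    and deriv_cont: "continuous_on I (deriv F)"
  shows "isCont (\<lambda>p. difference_quotient F (fst p) (snd p)) (x0, 0)"
  unfolding continuous_at_eps_delta
proof (intro allI impI)
  fix \<epsilon> :: real
  assume "\<epsilon> > 0"
  obtain e where e: "e > 0" "ball x0 e \<subseteq> I"
    using I openE by blast
  have "isCont (deriv F) x0"
    using deriv_cont I by (simp add: continuous_on_eq_continuous_at)
  then obtain d where d: "d > 0" "\<And>c. dist c x0 < d \<Longrightarrow> dist (deriv F c) (deriv F x0) < \<epsilon>"
    using \<open>\<epsilon> > 0\<close> unfolding continuous_at_eps_delta by blast
  show "\<exists>\<delta>>0. \<forall>p. dist p (x0, 0) < \<delta> \<longrightarrow>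
      dist (difference_quotient F (fst p) (snd p)) (difference_quotient F (fst (x0, 0)) (snd (x0, 0))) < \<epsilon>"
  proof (intro exI[of _ "min e d / 2"] conjI allI impI)
    show "min e d / 2 > 0"
      using e d by simp
    fix p :: "real \<times> real"
    assume "dist p (x0, 0) < min e d / 2"
    then have near: "\<bar>fst p - x0\<bar> < min e d / 2" "\<bar>snd p\<bar> < min e d / 2"
      using dist_fst_le[of p "(x0, 0)"] dist_snd_le[of p "(x0, 0)"] by (auto simp: dist_real_def)
    have "F differentiable (at y)" if "\<bar>y - fst p\<bar> \<le> \<bar>snd p\<bar>" for y
    proof -
      have "y \<in> ball x0 e"
        using near that unfolding mem_ball dist_real_def by linarith
      then show ?thesis
        using diff e(2) by blast
    qed
    then obtain c where c: "\<bar>c - fst p\<bar> \<le> \<bar>snd p\<bar>"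
      and dq: "difference_quotient F (fst p) (snd p) = deriv F c"
      using difference_quotient_mean_value by blast
    have "dist c x0 < d"
      using c near unfolding dist_real_def by linarith
    then show "dist (difference_quotient F (fst p) (snd p))
        (difference_quotient F (fst (x0, 0)) (snd (x0, 0))) < \<epsilon>"
      using d(2) dq by (simp add: difference_quotient_def)
  qed
qed

lemma difference_quotient_locally_bounded:
  fixes F :: "real \<Rightarrow> real"
  assumes bound: "\<And>y. \<bar>F y\<bar> \<le> B"
    and I: "open I" "x0 \<in> I" and diff: "\<forall>x\<in>I. F differentiable (at x)"
    and deriv_cont: "continuous_on I (deriv F)"
  obtains \<delta> C where "\<delta> > 0" "\<And>x h. \<bar>x - x0\<bar> < \<delta> \<Longrightarrow> \<bar>difference_quotient F x h\<bar> \<le> C"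
proof -
  obtain e where e: "e > 0" "ball x0 e \<subseteq> I"
    using I openE by blast
  define \<delta> where "\<delta> = e / 4"
  have cball: "cball x0 (2 * \<delta>) \<subseteq> I"
    using e by (auto simp: \<delta>_def)
  have "compact (deriv F ` cball x0 (2 * \<delta>))"
    by (intro compact_continuous_image continuous_on_subset[OF deriv_cont cball]) simp
  then obtain M where M: "\<And>c. c \<in> cball x0 (2 * \<delta>) \<Longrightarrow> \<bar>deriv F c\<bar> \<le> M"
    by (metis bounded_real compact_imp_bounded image_eqI)
  have "\<bar>difference_quotient F x h\<bar> \<le> max M (2 * B / \<delta>)" if x: "\<bar>x - x0\<bar> < \<delta>" for x h
  proof (cases "\<bar>h\<bar> < \<delta>")
    case True
    have "F differentiable (at y)" if "\<bar>y - x\<bar> \<le> \<bar>h\<bar>" for y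
    proof -
      have "y \<in> cball x0 (2 * \<delta>)"
        using x True that unfolding mem_cball dist_real_def by linarith
      then show ?thesis
        using diff cball by blast
    qed
    then obtain c where c: "\<bar>c - x\<bar> \<le> \<bar>h\<bar>" "difference_quotient F x h = deriv F c"
      using difference_quotient_mean_value by blast
    have "c \<in> cball x0 (2 * \<delta>)"
      using c(1) x True by (auto simp: dist_real_def)
    then show ?thesis
      using M c(2) by fastforce
  next
    case False
    then have h: "h \<noteq> 0" "\<delta> \<le> \<bar>h\<bar>" and "\<delta> > 0"
      using e by (auto simp: \<delta>_def)
    have "0 \<le> B"
      using bound[of 0] by simp
    have "\<bar>difference_quotient F x h\<bar> \<le> 2 * B / \<bar>h\<bar>"
      using abs_difference_quotient_le[OF bound h(1)] .
    also have "\<dots> \<le> 2 * B / \<delta>"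
      using h \<open>\<delta> > 0\<close> \<open>0 \<le> B\<close> by (intro divide_left_mono) auto
    finally show ?thesis
      by simp
  qed
  moreover have "\<delta> > 0"
    using e by (simp add: \<delta>_def)
  ultimately show ?thesis
    using that by blast
qed

(* normal_density 0 (sqrt 2) is \<Theta>\<^sub>1, so heat_weight is the \<phi> = - \<Theta>\<^sub>1' of the proof idea. *)
definition heat_weight :: "real \<Rightarrow> real" where
  "heat_weight z = z * normal_density 0 (sqrt 2) z / 2"

lemma borel_measurable_heat_weight [measurable]: "heat_weight \<in> borel_measurable borel"
  unfolding heat_weight_def by measurable

lemma has_bochner_integral_heat_weight: "has_bochner_integral lborel heat_weight 0"
proof -
  have "has_bochner_integral lborel (\<lambda>z. normal_density 0 (sqrt 2) z * (z - 0) ^ (2 * 0 + 1)) 0"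
    by (rule normal_moment_odd) simp
  from has_bochner_integral_divide_zero[OF this, of 2] show ?thesis
    by (simp add: heat_weight_def[abs_def] mult.commute)
qed

lemma has_bochner_integral_moment_heat_weight:
  "has_bochner_integral lborel (\<lambda>z. z * heat_weight z) 1"
proof -
  have "has_bochner_integral lborel (\<lambda>z. normal_density 0 (sqrt 2) z * (z - 0) ^ (2 * 1))
      (fact (2 * 1) / ((2 / (sqrt 2)\<^sup>2) ^ 1 * fact 1))"
    by (rule normal_moment_even) simp
  from has_bochner_integral_divide_zero[OF this, of 2] show ?thesis
    by (simp add: heat_weight_def fact_numeral power2_eq_square mult.commute mult.left_commute mult.assoc)
qed

lemma integrable_abs_heat_weight: "integrable lborel (\<lambda>z. \<bar>heat_weight z\<bar>)"
proof -
  have "integrable lborel (\<lambda>z. normal_density 0 (sqrt 2) z * \<bar>z - 0\<bar> ^ 1)"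
    by (rule integrable_normal_moment_abs) simp
  then show ?thesis
    by (simp add: heat_weight_def abs_mult mult.commute)
qed

lemma moment_heat_weight_nonneg: "0 \<le> z * heat_weight z"
  unfolding heat_weight_def by (simp add: mult.assoc[symmetric])

lemma integrable_bounded_mult_heat_weight:
  fixes F :: "real \<Rightarrow> real"
  assumes [measurable]: "F \<in> borel_measurable borel" and bound: "\<And>y. \<bar>F y\<bar> \<le> B"
  shows "integrable lborel (\<lambda>z. F (x + c * z) * heat_weight z)"
proof (rule Bochner_Integration.integrable_bound)
  show "integrable lborel (\<lambda>z. B * \<bar>heat_weight z\<bar>)"
    using integrable_abs_heat_weight by simp
  show "AE z in lborel. norm (F (x + c * z) * heat_weight z) \<le> norm (B * \<bar>heat_weight z\<bar>)"
    using bound by (intro AE_I2) (simp add: abs_mult mult_right_mono order_trans[OF _ abs_ge_self])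
qed measurable

lemma heat_kernel_has_real_derivative:
  "t > 0 \<Longrightarrow> (heat_kernel t has_real_derivative - y / (2 * t) * heat_kernel t y) (at y)"
  unfolding heat_kernel_def
  by (auto intro!: derivative_eq_intros simp: field_simps power2_eq_square)

lemma heat_kernel_rescale:
  assumes "t > 0"
  shows "heat_kernel t (sqrt t * z) = normal_density 0 (sqrt 2) z / sqrt t"
proof -
  have "sqrt (4 * pi * t) = sqrt (2 * pi * 2) * sqrt t"
    by (simp add: real_sqrt_mult[symmetric])
  then show ?thesis
    using assms by (simp add: heat_kernel_def normal_density_def power_mult_distrib)
qed

lemma Ac_conv_heat_rescaled:
  fixes F :: "real \<Rightarrow> real"
  assumes F_cont: "continuous_on UNIV F" and bound: "\<And>y. \<bar>F y\<bar> \<le> B" and t: "t > 0"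
  shows "Ac_conv_heat F t x = (LINT z|lborel. F (x + sqrt t * z) * heat_weight z) / sqrt t"
proof -
  have F_meas [measurable]: "F \<in> borel_measurable borel"
    using F_cont by (rule borel_measurable_continuous_onI)
  define h where "h \<xi> = heat_kernel t (x - \<xi>)" for \<xi>
  define g where "g \<xi> = F \<xi> * deriv h \<xi>" for \<xi>
  have "(h \<longlongrightarrow> 0) at_top"
    unfolding h_def heat_kernel_def using t by real_asymp
  then have h_top: "Lim at_top h = 0"
    by (rule tendsto_Lim[rotated]) simp
  have "(h has_real_derivative (x - \<xi>) / (2 * t) * h \<xi>) (at \<xi>)" for \<xi>
    unfolding h_def
    by (rule DERIV_chain2[OF heat_kernel_has_real_derivative[OF t], THEN DERIV_cong])
      (auto intro!: derivative_eq_intros)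
  then have g_eq: "g \<xi> = F \<xi> * ((x - \<xi>) / (2 * t) * h \<xi>)" for \<xi>
    unfolding g_def by (metis DERIV_imp_deriv)
  have g_rescaled: "g (x + sqrt t * z) = - (F (x + sqrt t * z) * heat_weight z) / t" for z
  proof -
    have "h (x + sqrt t * z) = normal_density 0 (sqrt 2) z / sqrt t"
      using heat_kernel_rescale[OF t, of "- z"] by (simp add: h_def normal_density_def)
    then show ?thesis
      using t by (simp add: g_eq heat_weight_def field_simps)
  qed
  have "integrable lborel (\<lambda>z. g (x + sqrt t * z))"
    unfolding g_rescaled using integrable_bounded_mult_heat_weight[OF F_meas bound] by simp
  then have "integrable lborel g"
    using lborel_integrable_real_affine_iff[of "sqrt t" g x] t by simp
  then have "integral UNIV g = integral\<^sup>L lborel g"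
    by (intro integral_unique has_integral_integral_lborel)
  also have "\<dots> = sqrt t * (LINT z|lborel. g (x + sqrt t * z))"
    using lborel_integral_real_affine[of "sqrt t" g x] t by simp
  also have "\<dots> = - (LINT z|lborel. F (x + sqrt t * z) * heat_weight z) / sqrt t"
    unfolding g_rescaled using t by (simp add: field_simps)
  finally show ?thesis
    unfolding Ac_conv_heat_def Ac_integral_mult_def h_def[symmetric] h_top g_def[symmetric]
    by simp
qed

definition heat_quotient_integrand :: "(real \<Rightarrow> real) \<Rightarrow> real \<times> real \<Rightarrow> real \<Rightarrow> real" where
  "heat_quotient_integrand F p z =
    difference_quotient F (fst p) (sqrt (snd p) * z) * (z * heat_weight z)"

definition heat_quotient_integral :: "(real \<Rightarrow> real) \<Rightarrow> real \<times> real \<Rightarrow> real" where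
  "heat_quotient_integral F p = (LINT z|lborel. heat_quotient_integrand F p z)"

lemma borel_measurable_heat_quotient_integrand:
  fixes F :: "real \<Rightarrow> real"
  assumes "continuous_on UNIV F"
  shows "heat_quotient_integrand F p \<in> borel_measurable lborel"
proof -
  have [measurable]: "F \<in> borel_measurable borel"
    using assms by (rule borel_measurable_continuous_onI)
  show ?thesis
    unfolding heat_quotient_integrand_def difference_quotient_def by measurable
qed

lemma Ac_conv_heat_eq_heat_quotient_integral:
  fixes F :: "real \<Rightarrow> real"
  assumes F_cont: "continuous_on UNIV F" and bound: "\<And>y. \<bar>F y\<bar> \<le> B" and t: "t > 0"
  shows "Ac_conv_heat F t x = heat_quotient_integral F (x, t)"
proof -
  have F_meas [measurable]: "F \<in> borel_measurable borel"
    using F_cont by (rule borel_measurable_continuous_onI)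
  have "Ac_conv_heat F t x = (LINT z|lborel. F (x + sqrt t * z) * heat_weight z) / sqrt t"
    using Ac_conv_heat_rescaled[OF F_cont bound t] .
  also have "\<dots> = (LINT z|lborel. F (x + sqrt t * z) * heat_weight z / sqrt t
      - F x / sqrt t * heat_weight z)"
    using integrable_bounded_mult_heat_weight[OF F_meas bound] has_bochner_integral_heat_weight
    by (simp add: has_bochner_integral_iff)
  also have "\<dots> = (LINT z|lborel. difference_quotient F x (sqrt t * z) * (z * heat_weight z))"
    using t by (intro Bochner_Integration.integral_cong)
      (auto simp: difference_quotient_def field_simps)
  finally show ?thesis
    by (simp add: heat_quotient_integral_def heat_quotient_integrand_def)
qed

lemma heat_quotient_integral_time_zero: "heat_quotient_integral F (x, 0) = deriv F x"
  using has_bochner_integral_moment_heat_weight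
  by (simp add: heat_quotient_integral_def heat_quotient_integrand_def difference_quotient_def
      has_bochner_integral_iff)

lemma isCont_heat_quotient_integral_positive_time:
  fixes F :: "real \<Rightarrow> real"
  assumes F_cont: "continuous_on UNIV F" and bound: "\<And>y. \<bar>F y\<bar> \<le> B" and t0: "t0 > 0"
  shows "isCont (heat_quotient_integral F) (x0, t0)"
  unfolding heat_quotient_integral_def
proof (rule isCont_integral_dominated[where w = "\<lambda>z. 2 * B / sqrt (t0 / 2) * \<bar>heat_weight z\<bar>"])
  show "heat_quotient_integrand F p \<in> borel_measurable lborel" for p
    using F_cont by (rule borel_measurable_heat_quotient_integrand)
  show "integrable lborel (\<lambda>z. 2 * B / sqrt (t0 / 2) * \<bar>heat_weight z\<bar>)"
    using integrable_abs_heat_weight by simp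
  show "isCont (\<lambda>p. heat_quotient_integrand F p z) (x0, t0)" for z
  proof (cases "z = 0")
    case False
    have "isCont (\<lambda>p. difference_quotient F (fst p) (snd p)) (x0, sqrt t0 * z)"
      using F_cont t0 False by (intro isCont_difference_quotient_nonzero) auto
    then have "isCont (\<lambda>p. difference_quotient F (fst p) (sqrt (snd p) * z)) (x0, t0)"
      using isCont_o2[where f = "\<lambda>p. (fst p, sqrt (snd p) * z)" and a = "(x0, t0)"
          and g = "\<lambda>p. difference_quotient F (fst p) (snd p)"]
      by (simp add: continuous_intros)
    then show ?thesis
      unfolding heat_quotient_integrand_def by (intro continuous_intros)
  qed (simp add: heat_quotient_integrand_def)
  have "eventually (\<lambda>p. t0 / 2 < snd p) (at (x0, t0))"
    using t0 by (intro order_tendstoD(1)[OF tendsto_snd[OF tendsto_ident_at]]) auto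
  then show "eventually (\<lambda>p. \<forall>z\<in>space lborel.
      norm (heat_quotient_integrand F p z) \<le> 2 * B / sqrt (t0 / 2) * \<bar>heat_weight z\<bar>) (at (x0, t0))"
  proof eventually_elim
    case (elim p)
    have "0 \<le> B"
      using bound[of 0] by simp
    have dq_le: "\<bar>difference_quotient F (fst p) (sqrt (snd p) * z)\<bar> * \<bar>z\<bar> \<le> 2 * B / sqrt (t0 / 2)"
      for z
      using elim t0 \<open>0 \<le> B\<close>
      by (intro order_trans[OF abs_difference_quotient_scaled_le[OF bound] divide_left_mono]) auto
    show ?case
    proof
      fix z
      have "norm (heat_quotient_integrand F p z)
          = \<bar>difference_quotient F (fst p) (sqrt (snd p) * z)\<bar> * \<bar>z\<bar> * \<bar>heat_weight z\<bar>"
        by (simp add: heat_quotient_integrand_def abs_mult)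
      also have "\<dots> \<le> 2 * B / sqrt (t0 / 2) * \<bar>heat_weight z\<bar>"
        by (rule mult_right_mono[OF dq_le]) simp
      finally show "norm (heat_quotient_integrand F p z) \<le> 2 * B / sqrt (t0 / 2) * \<bar>heat_weight z\<bar>" .
    qed
  qed
qed

lemma isCont_heat_quotient_integral_time_zero:
  fixes F :: "real \<Rightarrow> real"
  assumes F_cont: "continuous_on UNIV F" and bound: "\<And>y. \<bar>F y\<bar> \<le> B"
    and I: "open I" "x0 \<in> I" and diff: "\<forall>x\<in>I. F differentiable (at x)"
    and deriv_cont: "continuous_on I (deriv F)"
  shows "isCont (heat_quotient_integral F) (x0, 0)"
proof -
  obtain \<delta> C where \<delta>: "\<delta> > 0"
    and C: "\<And>x h. \<bar>x - x0\<bar> < \<delta> \<Longrightarrow> \<bar>difference_quotient F x h\<bar> \<le> C"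
    using difference_quotient_locally_bounded[OF bound I diff deriv_cont] by blast
  show ?thesis
    unfolding heat_quotient_integral_def
  proof (rule isCont_integral_dominated[where w = "\<lambda>z. C * (z * heat_weight z)"])
    show "heat_quotient_integrand F p \<in> borel_measurable lborel" for p
      using F_cont by (rule borel_measurable_heat_quotient_integrand)
    show "integrable lborel (\<lambda>z. C * (z * heat_weight z))"
      using has_bochner_integral_moment_heat_weight by (simp add: has_bochner_integral_iff)
    show "isCont (\<lambda>p. heat_quotient_integrand F p z) (x0, 0)" for z
    proof -
      have "isCont (\<lambda>p. difference_quotient F (fst p) (sqrt (snd p) * z)) (x0, 0)"
        using isCont_o2[where f = "\<lambda>p. (fst p, sqrt (snd p) * z)" and a = "(x0, 0)"
            and g = "\<lambda>p. difference_quotient F (fst p) (snd p)"]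
          isCont_difference_quotient_zero[OF I diff deriv_cont]
        by (simp add: continuous_intros)
      then show ?thesis
        unfolding heat_quotient_integrand_def by (intro continuous_intros)
    qed
    have "eventually (\<lambda>p. dist (fst p) x0 < \<delta>) (at (x0, 0))"
      using \<delta> by (intro tendstoD[OF tendsto_fst[OF tendsto_ident_at], of _ "(x0, 0)", simplified])
    then show "eventually (\<lambda>p. \<forall>z\<in>space lborel.
        norm (heat_quotient_integrand F p z) \<le> C * (z * heat_weight z)) (at (x0, 0))"
    proof eventually_elim
      case (elim p)
      show ?case
      proof
        fix z
        have "norm (heat_quotient_integrand F p z)
            = \<bar>difference_quotient F (fst p) (sqrt (snd p) * z)\<bar> * (z * heat_weight z)"
          using moment_heat_weight_nonneg[of z] unfolding heat_quotient_integrand_def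
          by (metis abs_mult abs_of_nonneg real_norm_def)
        also have "\<dots> \<le> C * (z * heat_weight z)"
          using C elim moment_heat_weight_nonneg[of z] by (intro mult_right_mono) (auto simp: dist_real_def)
        finally show "norm (heat_quotient_integrand F p z) \<le> C * (z * heat_weight z)" .
      qed
    qed
  qed
qed

theorem theorem3p5:
  fixes F :: "real \<Rightarrow> real" and I :: "real set" and u :: "real \<times> real \<Rightarrow> real"
  assumes F_Bc: "in_Bc F"
    and I_open: "open I" and I_interval: "is_interval I"
    and F_diff: "\<forall>x\<in>I. F differentiable (at x)"
    and F_C1: "continuous_on I (deriv F)"
    and u_pos: "\<forall>x t. t > 0 \<longrightarrow> u (x, t) = Ac_conv_heat F t x"
    and u_zero: "\<forall>x. u (x, 0) = (if x \<in> I then deriv F x else 0)"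
  shows "continuous_on ({p. snd p > 0} \<union> (I \<times> {0})) u"
proof -
  have F_cont: "continuous_on UNIV F"
    using F_Bc by (simp add: in_Bc_def)
  have "bounded (range F)"
    using F_Bc bounded_range_if_limits_at_infinity[OF F_cont] unfolding in_Bc_def by blast
  then obtain B where B: "\<And>y. \<bar>F y\<bar> \<le> B"
    by (auto simp: bounded_real)
  have "isCont (heat_quotient_integral F) p" if "p \<in> {p. snd p > 0} \<union> (I \<times> {0})" for p
    using that isCont_heat_quotient_integral_positive_time[OF F_cont B]
      isCont_heat_quotient_integral_time_zero[OF F_cont B I_open _ F_diff F_C1]
    by (cases p) auto
  then have "continuous_on ({p. snd p > 0} \<union> (I \<times> {0})) (heat_quotient_integral F)"
    by (intro continuous_at_imp_continuous_on) blast
  moreover have "heat_quotient_integral F p = u p" if "p \<in> {p. snd p > 0} \<union> (I \<times> {0})" for p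
    using that u_pos u_zero Ac_conv_heat_eq_heat_quotient_integral[OF F_cont B]
      heat_quotient_integral_time_zero
    by (cases p) auto
  ultimately show ?thesis
    by (rule continuous_on_eq)
qed

end
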